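(* The third order mock theta function $\psi_3(q)=\sum_{n\ge0}\frac{q^{n^2}}{(q;q^2)_n}$ is the generating function $\sum_\pi q^{|\pi|}$ over partitions $\pi$ with $n$ copies of $n$ (including the empty one) in which, with parts in ascending lexicographic order, the weighted difference between each part and the preceding one is exactly $0$, and the smallest part is of the form $j_j$.
   Context: $M=\{m_i: 1\le i\le m\}$; a partition with $n$ copies of $n$ is a finite multiset of elements of $M$, $|\pi|$ the sum of values. Lexicographic order: $m_i>n_j$ iff $m>n$, or $m=n$ and $i>j$. Weighted difference $((m_i-n_j))=m-n-i-j$. $(a;q)_n=\prod_{j=0}^{n-1}(1-aq^j)$. *)

theory Defs
  imports Complex_Main "HOL-Library.Multiset" "HOL-Library.Product_Lexorder"
begin

definition qpoch :: "complex \<Rightarrow> complex \<Rightarrow> nat \<Rightarrow> complex" where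
  "qpoch a q n = (\<Prod>j<n. 1 - a * q ^ j)"

definition psi3 :: "complex \<Rightarrow> complex" where
  "psi3 q = (\<Sum>n. q ^ (n\<^sup>2) / qpoch q (q\<^sup>2) n)"

text \<open>A part m_i of a partition with n copies of n is encoded as the pair (m, i)
  with 1 <= i <= m. The product order from Product_Lexorder is exactly the
  lexicographic order of the paper: (m,i) > (n,j) iff m > n, or m = n and i > j.\<close>
definition is_part :: "nat \<times> nat \<Rightarrow> bool" where
  "is_part p \<longleftrightarrow> 1 \<le> snd p \<and> snd p \<le> fst p"

definition is_ncopy_partition :: "(nat \<times> nat) multiset \<Rightarrow> bool" where
  "is_ncopy_partition \<pi> \<longleftrightarrow> (\<forall>p\<in>#\<pi>. is_part p)"

definition pweight :: "(nat \<times> nat) multiset \<Rightarrow> nat" where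
  "pweight \<pi> = sum_mset (image_mset fst \<pi>)"

definition wdiff :: "nat \<times> nat \<Rightarrow> nat \<times> nat \<Rightarrow> int" where
  "wdiff p r = int (fst p) - int (fst r) - int (snd p) - int (snd r)"

definition psi3_partition :: "(nat \<times> nat) multiset \<Rightarrow> bool" where
  "psi3_partition \<pi> \<longleftrightarrow> is_ncopy_partition \<pi> \<and>
     (let xs = sorted_list_of_multiset \<pi> in
        (\<forall>t. Suc t < length xs \<longrightarrow> wdiff (xs ! Suc t) (xs ! t) = 0) \<and>
        (xs \<noteq> [] \<longrightarrow> fst (hd xs) = snd (hd xs)))"

definition psi3_count :: "nat \<Rightarrow> nat" where
  "psi3_count N = card {\<pi>. psi3_partition \<pi> \<and> pweight \<pi> = N}"

end

theory Submission
  imports Defs "HOL-Analysis.Infinite_Sum"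
begin

text \<open>Listing the parts of a counted partition in ascending order as
  \<open>(m_0)_(i_0), ..., (m_(k-1))_(i_(k-1))\<close>, zero weighted differences force
  \<open>m_(t+1) = m_t + i_t + i_(t+1)\<close> and the smallest part has \<open>m_0 = i_0\<close>. So the partition is
  determined by an arbitrary sequence of copy numbers \<open>i_t \<ge> 1\<close>, with
  \<open>m_t = 2(i_0 + ... + i_(t-1)) + i_t\<close>, and its weight is \<open>\<Sum>t<k. (2(k-1-t)+1) i_t\<close>.
  Summing over the independent \<open>i_t\<close> gives \<open>\<Prod>t<k. q^(2t+1) / (1 - q^(2t+1)) = q^(k^2) / (q;q^2)_k\<close>,
  and absolute convergence of the double sum over \<open>k\<close> and the copy numbers allows
  regrouping it by weight.\<close>

definition chain_part :: "(nat \<Rightarrow> nat) \<Rightarrow> nat \<Rightarrow> nat" where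
  "chain_part i t = 2 * (\<Sum>s<t. i s) + i t"

definition chain_parts :: "nat \<Rightarrow> (nat \<Rightarrow> nat) \<Rightarrow> (nat \<times> nat) list" where
  "chain_parts k i = map (\<lambda>t. (chain_part i t, i t)) [0..<k]"

definition copy_seqs :: "nat \<Rightarrow> (nat \<Rightarrow> nat) set" where
  "copy_seqs k = PiE {..<k} (\<lambda>_. {1..})"

definition chain_weight :: "nat \<Rightarrow> (nat \<Rightarrow> nat) \<Rightarrow> nat" where
  "chain_weight k i = (\<Sum>t<k. (2 * (k - 1 - t) + 1) * i t)"

lemma copy_seqs_pos: "i \<in> copy_seqs k \<Longrightarrow> t < k \<Longrightarrow> 1 \<le> i t"
  by (auto simp: copy_seqs_def PiE_def Pi_def)

lemma chain_part_Suc: "chain_part i (Suc t) = chain_part i t + i t + i (Suc t)"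
  by (simp add: chain_part_def)

lemma chain_part_strict_mono:
  assumes "t < t'" "1 \<le> i t" shows "chain_part i t < chain_part i t'"
proof -
  have "(\<Sum>s<Suc t. i s) \<le> (\<Sum>s<t'. i s)"
    using assms by (intro sum_mono2) auto
  thus ?thesis using assms by (simp add: chain_part_def)
qed

lemma sorted_chain_parts:
  assumes "i \<in> copy_seqs k" shows "sorted (chain_parts k i)"
  unfolding sorted_iff_nth_mono_less
proof (intro allI impI)
  fix a b assume "a < b" "b < length (chain_parts k i)"
  then have "chain_part i a < chain_part i b"
    using chain_part_strict_mono copy_seqs_pos[OF assms] by (simp add: chain_parts_def)
  thus "chain_parts k i ! a \<le> chain_parts k i ! b"
    using \<open>a < b\<close> \<open>b < length (chain_parts k i)\<close> by (simp add: chain_parts_def)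
qed

lemma sum_chain_part: "(\<Sum>t<k. chain_part i t) = chain_weight k i"
proof (induction k)
  case 0
  then show ?case by (simp add: chain_weight_def)
next
  case (Suc k)
  have "(2 * (Suc k - 1 - t) + 1) * i t = (2 * (k - 1 - t) + 1) * i t + 2 * i t" if "t < k" for t
  proof -
    have "Suc k - 1 - t = Suc (k - 1 - t)" using that by simp
    then show ?thesis by (simp add: algebra_simps)
  qed
  then have "chain_weight (Suc k) i = chain_weight k i + 2 * (\<Sum>t<k. i t) + i k"
    by (simp add: chain_weight_def sum.distrib sum_distrib_left)
  moreover have "(\<Sum>t<Suc k. chain_part i t) = chain_weight k i + chain_part i k"
    by (simp add: Suc.IH)
  ultimately show ?case by (simp add: chain_part_def)
qed

lemma psi3_partition_chain_parts:
  assumes "i \<in> copy_seqs k"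
  shows "psi3_partition (mset (chain_parts k i))"
proof -
  have "sorted_list_of_multiset (mset (chain_parts k i)) = chain_parts k i"
    using sorted_chain_parts[OF assms] by (simp add: sorted_sort_id)
  moreover have "is_ncopy_partition (mset (chain_parts k i))"
    using copy_seqs_pos[OF assms]
    by (auto simp: is_ncopy_partition_def is_part_def chain_parts_def chain_part_def)
  moreover have "wdiff (chain_parts k i ! Suc t) (chain_parts k i ! t) = 0"
    if "Suc t < length (chain_parts k i)" for t
    using that by (simp add: chain_parts_def wdiff_def chain_part_Suc del: upt_Suc)
  moreover have "fst (hd (chain_parts k i)) = snd (hd (chain_parts k i))"
    if "chain_parts k i \<noteq> []"
    using that by (cases k) (auto simp: chain_parts_def chain_part_def upt_conv_Cons simp del: upt_Suc)
  ultimately show ?thesis by (simp add: psi3_partition_def Let_def)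
qed

lemma pweight_chain_parts: "pweight (mset (chain_parts k i)) = chain_weight k i"
  unfolding pweight_def chain_parts_def mset_map[symmetric] sum_mset_sum_list map_map
  by (simp add: o_def sum_list_distinct_conv_sum_set atLeast0LessThan flip: sum_chain_part)

lemma chain_parts_inj:
  assumes "i \<in> copy_seqs k" "i' \<in> copy_seqs k'"
    and "mset (chain_parts k i) = mset (chain_parts k' i')"
  shows "k = k' \<and> i = i'"
proof -
  have "sort (chain_parts k i) = sort (chain_parts k' i')"
    using assms(3) by (metis sorted_list_of_multiset_mset)
  hence eq: "chain_parts k i = chain_parts k' i'"
    using sorted_chain_parts[OF assms(1)] sorted_chain_parts[OF assms(2)] by (simp add: sorted_sort_id)
  hence "k = k'" by (metis chain_parts_def length_map length_upt diff_zero)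
  moreover have "i t = i' t" for t
  proof (cases "t < k")
    case True
    then have "chain_parts k i ! t = chain_parts k' i' ! t" using eq by simp
    then show ?thesis using True \<open>k = k'\<close> by (simp add: chain_parts_def)
  next
    case False
    then show ?thesis using assms(1,2) \<open>k = k'\<close> by (auto simp: copy_seqs_def PiE_def extensional_def)
  qed
  ultimately show ?thesis by auto
qed

lemma psi3_partition_imp_chain_parts:
  assumes "psi3_partition \<pi>"
  shows "\<exists>k i. i \<in> copy_seqs k \<and> \<pi> = mset (chain_parts k i)"
proof -
  define xs where "xs = sorted_list_of_multiset \<pi>"
  define k where "k = length xs"
  define i where "i t = (if t < k then snd (xs ! t) else undefined)" for t
  have parts: "is_part (xs ! t)" if "t < k" for t
    using assms that unfolding psi3_partition_def is_ncopy_partition_def k_def xs_def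
    by (metis nth_mem set_mset_mset mset_sorted_list_of_multiset)
  have wd: "wdiff (xs ! Suc t) (xs ! t) = 0" if "Suc t < k" for t
    using assms that unfolding psi3_partition_def Let_def k_def xs_def by blast
  have hd: "fst (hd xs) = snd (hd xs)" if "xs \<noteq> []"
    using assms that unfolding psi3_partition_def Let_def xs_def by blast
  have "i \<in> copy_seqs k"
    using parts by (auto simp: copy_seqs_def i_def is_part_def PiE_def extensional_def)
  moreover have fst: "fst (xs ! t) = chain_part i t" if "t < k" for t
    using that
  proof (induction t)
    case 0
    then show ?case using hd by (simp add: k_def hd_conv_nth chain_part_def i_def)
  next
    case (Suc t)
    then show ?case using wd[of t] by (simp add: wdiff_def chain_part_Suc i_def)
  qed
  have "xs = chain_parts k i"
    by (rule nth_equalityI) (auto simp: chain_parts_def k_def fst i_def intro: prod_eqI)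
  hence "\<pi> = mset (chain_parts k i)" by (metis xs_def mset_sorted_list_of_multiset)
  ultimately show ?thesis by blast
qed

lemma bij_betw_chains_psi3_partitions:
  "bij_betw (\<lambda>(k, i). mset (chain_parts k i))
     {(k, i). i \<in> copy_seqs k \<and> chain_weight k i = N}
     {\<pi>. psi3_partition \<pi> \<and> pweight \<pi> = N}"
proof (rule bij_betw_imageI)
  show "inj_on (\<lambda>(k, i). mset (chain_parts k i)) {(k, i). i \<in> copy_seqs k \<and> chain_weight k i = N}"
  proof (rule inj_onI, clarify)
    fix k i k' i'
    assume "i \<in> copy_seqs k" "i' \<in> copy_seqs k'" "mset (chain_parts k i) = mset (chain_parts k' i')"
    then show "k = k' \<and> i = i'" by (rule chain_parts_inj)
  qed
  show "(\<lambda>(k, i). mset (chain_parts k i)) ` {(k, i). i \<in> copy_seqs k \<and> chain_weight k i = N}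
      = {\<pi>. psi3_partition \<pi> \<and> pweight \<pi> = N}"
  proof (intro equalityI subsetI)
    fix \<pi> assume "\<pi> \<in> {\<pi>. psi3_partition \<pi> \<and> pweight \<pi> = N}"
    then obtain k i where "i \<in> copy_seqs k" "\<pi> = mset (chain_parts k i)" "pweight \<pi> = N"
      using psi3_partition_imp_chain_parts by blast
    then show "\<pi> \<in> (\<lambda>(k, i). mset (chain_parts k i)) ` {(k, i). i \<in> copy_seqs k \<and> chain_weight k i = N}"
      by (auto simp: pweight_chain_parts image_iff)
  qed (auto simp: psi3_partition_chain_parts pweight_chain_parts)
qed

lemma finite_chains_of_weight:
  "finite {(k, i). i \<in> copy_seqs k \<and> chain_weight k i = N}"
proof (rule finite_subset)
  show "finite (SIGMA k:{..N}. PiE {..<k} (\<lambda>_. {1..N}))"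
    by (intro finite_SigmaI finite_PiE) auto
  show "{(k, i). i \<in> copy_seqs k \<and> chain_weight k i = N} \<subseteq> (SIGMA k:{..N}. PiE {..<k} (\<lambda>_. {1..N}))"
  proof (rule subsetI)
    fix x assume "x \<in> {(k, i). i \<in> copy_seqs k \<and> chain_weight k i = N}"
    then obtain k i where x: "x = (k, i)" and i: "i \<in> copy_seqs k" and N: "N = chain_weight k i"
      by auto
    have sum_le: "(\<Sum>t<k. i t) \<le> N"
      unfolding N chain_weight_def by (rule sum_mono) simp
    have "k \<le> (\<Sum>t<k. i t)"
      using sum_mono[of "{..<k}" "\<lambda>_. 1::nat" i] copy_seqs_pos[OF i] by simp
    moreover have "i t \<le> N" if "t < k" for t
      using member_le_sum[of t "{..<k}" i] sum_le that by simp
    ultimately show "x \<in> (SIGMA k:{..N}. PiE {..<k} (\<lambda>_. {1..N}))"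
      using i sum_le copy_seqs_pos[OF i] by (auto simp: x copy_seqs_def PiE_def Pi_def)
  qed
qed

lemma card_chains_of_weight:
  "card {(k, i). i \<in> copy_seqs k \<and> chain_weight k i = N} = psi3_count N"
  unfolding psi3_count_def by (rule bij_betw_same_card[OF bij_betw_chains_psi3_partitions])

text \<open>The library's \<open>infsum_prod_PiE_abs\<close> proves this summability only internally.\<close>

lemma abs_summable_on_prod_PiE:
  fixes f :: "'a \<Rightarrow> 'b \<Rightarrow> 'c :: {banach, real_normed_div_algebra, comm_semiring_1}"
  assumes "finite A" and "\<And>x. x \<in> A \<Longrightarrow> f x abs_summable_on B x"
  shows "(\<lambda>g. \<Prod>x\<in>A. f x (g x)) abs_summable_on PiE A B"
proof (cases "\<exists>x\<in>A. infsum (\<lambda>y. norm (f x y)) (B x) = 0")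
  case True
  then obtain x where x: "x \<in> A" "infsum (\<lambda>y. norm (f x y)) (B x) = 0" by blast
  have "(\<Prod>x\<in>A. f x (g x)) = 0" if "g \<in> PiE A B" for g
  proof -
    have "norm (f x (g x)) = 0"
      using x assms(2) that by (intro nonneg_infsum_le_0D[where A = "B x"]) auto
    then show ?thesis using x assms(1) by (intro prod_zero) auto
  qed
  then show ?thesis by (simp add: summable_on_0)
next
  case False
  \<comment> \<open>the product of the sums of norms is nonzero, so the infinite sum of the product,
    which equals it, cannot be the junk value of a divergent sum\<close>
  have "infsum (\<lambda>g. \<Prod>x\<in>A. norm (f x (g x))) (PiE A B) = (\<Prod>x\<in>A. infsum (\<lambda>y. norm (f x y)) (B x))"
    using assms by (intro infsum_prod_PiE_abs) auto
  also have "\<dots> \<noteq> 0"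
    using False assms(1) by (simp add: prod_zero_iff)
  finally have "(\<lambda>g. \<Prod>x\<in>A. norm (f x (g x))) summable_on PiE A B"
    using infsum_not_exists by blast
  then show ?thesis by (simp add: prod_norm)
qed

lemma has_sum_prod_PiE:
  fixes f :: "'a \<Rightarrow> 'b \<Rightarrow> 'c :: {banach, real_normed_div_algebra, comm_semiring_1}"
  assumes "finite A" and "\<And>x. x \<in> A \<Longrightarrow> f x abs_summable_on B x"
  shows "((\<lambda>g. \<Prod>x\<in>A. f x (g x)) has_sum (\<Prod>x\<in>A. infsum (f x) (B x))) (PiE A B)"
  using has_sum_infsum[OF abs_summable_summable[OF abs_summable_on_prod_PiE[OF assms]]]
  by (simp add: infsum_prod_PiE_abs[OF assms])

lemma sum_odd_numbers: "(\<Sum>s<k. 2 * s + 1) = (k::nat)\<^sup>2"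
  by (induction k) (auto simp: power2_eq_square)

lemma has_sum_power_chain_weight:
  fixes z :: "'a :: {real_normed_field, banach}"
  assumes "norm z < 1"
  shows "((\<lambda>i. z ^ chain_weight k i) has_sum z ^ k\<^sup>2 / (\<Prod>s<k. 1 - z ^ (2 * s + 1))) (copy_seqs k)"
proof -
  define w where "w t = z ^ (2 * (k - 1 - t) + 1)" for t
  have w_lt: "norm (w t) < 1" for t
    unfolding w_def norm_power using assms by (intro power_less_one_iff[THEN iffD2]) auto
  have "(\<lambda>n. w t ^ n) abs_summable_on {1..}" for t
    using has_sum_geometric_from_1[of "norm (w t)"] w_lt by (auto simp: summable_on_def norm_power)
  then have "((\<lambda>i. \<Prod>t<k. w t ^ i t) has_sum (\<Prod>t<k. infsum (\<lambda>n. w t ^ n) {1..})) (copy_seqs k)"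
    unfolding copy_seqs_def by (intro has_sum_prod_PiE) auto
  also have "(\<Prod>t<k. infsum (\<lambda>n. w t ^ n) {1..}) = (\<Prod>t<k. w t / (1 - w t))"
    by (intro prod.cong refl infsumI has_sum_geometric_from_1 w_lt)
  also have "\<dots> = (\<Prod>t<k. (\<lambda>s. z ^ (2 * s + 1) / (1 - z ^ (2 * s + 1))) (k - Suc t))"
    by (simp add: w_def)
  also have "\<dots> = (\<Prod>s<k. z ^ (2 * s + 1) / (1 - z ^ (2 * s + 1)))"
    by (rule prod.nat_diff_reindex)
  also have "\<dots> = (\<Prod>s<k. z ^ (2 * s + 1)) / (\<Prod>s<k. 1 - z ^ (2 * s + 1))"
    by (rule prod_dividef)
  also have "(\<Prod>s<k. z ^ (2 * s + 1)) = z ^ k\<^sup>2"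
    by (simp only: power_sum[symmetric] sum_odd_numbers)
  finally show ?thesis
    unfolding chain_weight_def power_sum w_def by (simp only: power_mult)
qed

lemma summable_odd_power_series:
  fixes r :: real
  assumes "0 \<le> r" "r < 1"
  shows "summable (\<lambda>k. r ^ k\<^sup>2 / (\<Prod>s<k. 1 - r ^ (2 * s + 1)))"
proof -
  define P where "P k = (\<Prod>s<k. 1 - r ^ (2 * s + 1))" for k
  have P_pos: "0 < P k" for k
    unfolding P_def using assms by (intro prod_pos) (simp add: power_less_one_iff del: power_Suc)
  have "eventually (\<lambda>n. r ^ n < 1/3) sequentially"
    using LIMSEQ_power_zero[of r] assms by (intro order_tendstoD) auto
  then obtain N where N: "\<And>n. N \<le> n \<Longrightarrow> r ^ n < 1/3"
    by (auto simp: eventually_sequentially)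
  show ?thesis
    unfolding P_def[symmetric]
  proof (rule summable_ratio_test[of "1/2" N])
    fix n assume "N \<le> n"
    define x where "x = r ^ (2 * n + 1)"
    have "0 \<le> x" "x < 1/3"
      using N[of "2 * n + 1"] \<open>N \<le> n\<close> assms by (auto simp: x_def)
    then have ratio: "x / (1 - x) \<le> 1/2"
      by (simp add: field_simps)
    have "(Suc n)\<^sup>2 = n\<^sup>2 + (2 * n + 1)"
      by (simp add: power2_eq_square)
    then have "r ^ (Suc n)\<^sup>2 = r ^ n\<^sup>2 * x"
      by (simp add: x_def power_add)
    moreover have "P (Suc n) = P n * (1 - x)"
      by (simp add: P_def x_def)
    ultimately have eq: "r ^ (Suc n)\<^sup>2 / P (Suc n) = r ^ n\<^sup>2 / P n * (x / (1 - x))"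
      by simp
    have nonneg: "0 \<le> r ^ n\<^sup>2 / P n" "0 \<le> x / (1 - x)"
      using P_pos[of n] assms \<open>0 \<le> x\<close> \<open>x < 1/3\<close> by simp_all
    show "norm (r ^ (Suc n)\<^sup>2 / P (Suc n)) \<le> 1/2 * norm (r ^ n\<^sup>2 / P n)"
      unfolding eq real_norm_def abs_mult abs_of_nonneg[OF nonneg(1)] abs_of_nonneg[OF nonneg(2)]
      using mult_left_mono[OF ratio nonneg(1)] by (simp add: mult.commute)
  qed simp
qed

lemma abs_summable_on_chains:
  fixes z :: "'a :: {real_normed_field, banach}"
  assumes "norm z < 1"
  shows "(\<lambda>(k, i). z ^ chain_weight k i) abs_summable_on Sigma UNIV copy_seqs"
  unfolding abs_summable_on_Sigma_iff
proof (intro conjI ballI)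
  define a where "a k = norm z ^ k\<^sup>2 / (\<Prod>s<k. 1 - norm z ^ (2 * s + 1))" for k
  have fibre: "((\<lambda>i. norm (z ^ chain_weight k i)) has_sum a k) (copy_seqs k)" for k
    unfolding norm_power a_def by (rule has_sum_power_chain_weight) (simp add: assms)
  then show "(\<lambda>i. case (k, i) of (k, i) \<Rightarrow> z ^ chain_weight k i) abs_summable_on copy_seqs k" for k
    by (auto simp: summable_on_def)
  have "summable a"
    unfolding a_def using assms by (intro summable_odd_power_series) auto
  moreover have "0 \<le> a k" for k
    unfolding a_def using assms
    by (intro divide_nonneg_pos prod_pos) (simp_all add: power_less_one_iff del: power_Suc)
  ultimately have "(\<lambda>k. norm (a k)) summable_on UNIV"
    by (simp add: summable_on_UNIV_nonneg_real_iff)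
  then show "(\<lambda>k. infsum (\<lambda>i. norm (case (k, i) of (k, i) \<Rightarrow> z ^ chain_weight k i)) (copy_seqs k))
      abs_summable_on UNIV"
    using fibre[THEN infsumI] by simp
qed

lemma has_sum_regroup_finite_fibres:
  fixes f :: "'a \<Rightarrow> 'b :: {comm_monoid_add, uniform_space, uniform_topological_group_add}"
  assumes "(f has_sum s) A" and "\<And>n. finite {x \<in> A. w x = n}"
  shows "((\<lambda>n. \<Sum>x \<in> {x \<in> A. w x = n}. f x) has_sum s) UNIV"
proof -
  have "inj_on (\<lambda>x. (w x, x)) A"
    by (rule inj_onI) simp
  moreover have "(\<lambda>x. (w x, x)) ` A = (SIGMA n:UNIV. {x \<in> A. w x = n})"
    by auto
  ultimately have "((f \<circ> snd) has_sum s) (SIGMA n:UNIV. {x \<in> A. w x = n})"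
    using assms(1) has_sum_reindex[of "\<lambda>x. (w x, x)" A "f \<circ> snd"] by (simp add: o_def)
  then show ?thesis
    by (rule has_sum_Sigma') (auto intro: has_sum_finiteI assms(2))
qed

lemma qpoch_square_base: "qpoch z (z\<^sup>2) k = (\<Prod>s<k. 1 - z ^ (2 * s + 1))"
  unfolding qpoch_def by (intro prod.cong refl) (simp add: power_mult[symmetric])

theorem theorem27:
  fixes q :: complex
  assumes "norm q < 1"
  shows "summable (\<lambda>n. q ^ (n\<^sup>2) / qpoch q (q\<^sup>2) n)
     \<and> (\<lambda>N. of_nat (psi3_count N) * q ^ N) sums psi3 q"
proof -
  let ?f = "\<lambda>(k, i). q ^ chain_weight k i"
  obtain V where V: "(?f has_sum V) (Sigma UNIV copy_seqs)"
    using abs_summable_summable[OF abs_summable_on_chains[OF assms]] by (auto simp: summable_on_def)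
  have "((\<lambda>i. ?f (k, i)) has_sum q ^ k\<^sup>2 / qpoch q (q\<^sup>2) k) (copy_seqs k)" for k
    using has_sum_power_chain_weight[OF assms, of k] by (simp add: qpoch_square_base)
  then have series: "(\<lambda>k. q ^ k\<^sup>2 / qpoch q (q\<^sup>2) k) sums V"
    by (intro has_sum_imp_sums has_sum_Sigma'[OF V])
  have fibres: "{x \<in> Sigma UNIV copy_seqs. case_prod chain_weight x = N}
      = {(k, i). i \<in> copy_seqs k \<and> chain_weight k i = N}" for N
    by auto
  have "(\<Sum>x \<in> {(k, i). i \<in> copy_seqs k \<and> chain_weight k i = N}. ?f x) = of_nat (psi3_count N) * q ^ N" for N
    by (simp add: card_chains_of_weight[symmetric] case_prod_unfold)
  then have "((\<lambda>N. of_nat (psi3_count N) * q ^ N) has_sum V) UNIV"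
    using has_sum_regroup_finite_fibres[OF V, of "case_prod chain_weight"]
    by (simp add: fibres finite_chains_of_weight)
  moreover have "psi3 q = V"
    unfolding psi3_def using series by (rule sums_unique[symmetric])
  ultimately show ?thesis
    using series by (auto intro: sums_summable has_sum_imp_sums)
qed

end
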